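(* Let $X$ be a uniformly locally finite metric space and $h\colon X\to\mathbb{R}$ a map, regarded also as the multiplication operator on $\ell_2(X)$. The following are equivalent: (1) the map $h$ is coarse; (2) $\mathrm{dom}(h)$ is invariant under partial translations and, for every $r>0$, $\sup_f\|[h,v_f]\|<\infty$, the supremum over all partial $r$-translations $f$ of $X$; (3) $\mathrm{dom}(h)$ is invariant under partial translations and $\|[h,v_f]\|<\infty$ for every partial translation $f$ of $X$.
   Context: Uniformly locally finite: $\sup_x|B_r(x)|<\infty$ for all $r>0$. The multiplication operator of $h$ has domain $\{\xi\in\ell_2(X):\sum_x|h_x\xi_x|^2<\infty\}$ and $(h\xi)_x=h_x\xi_x$. A map $h\colon X\to\mathbb{R}$ is coarse if for every $r>0$ there is $s>0$ with $|h_x-h_z|\le s$ whenever $d(x,z)\le r$. A partial translation is a bijection $f\colon\mathrm{dom}(f)\subseteq X\to\mathrm{ran}(f)\subseteq X$ with $\sup_{x\in\mathrm{dom}(f)}d(x,f(x))<\infty$; it is a partial $r$-translation if this supremum is at most $r$. $v_f\delta_x=\delta_{f(x)}$ for $x\in\mathrm{dom}(f)$ and $0$ otherwise. A subspace $E$ is invariant under partial translations if $v_f(E)\subseteq E$ for all partial translations $f$. $[h,v_f]=hv_f-v_fh$ on $\mathrm{dom}(h)$, and $\|\cdot\|$ denotes the possibly infinite operator norm on the domain. *)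

theory Defs
  imports "HOL-Analysis.Analysis"
begin

definition unif_locally_finite :: "'a::metric_space itself \<Rightarrow> bool" where
  "unif_locally_finite _ \<longleftrightarrow>
     (\<forall>r>0. \<exists>N::nat. \<forall>x::'a. finite (cball x r) \<and> card (cball x r) \<le> N)"

definition coarse_map :: "('a::metric_space \<Rightarrow> real) \<Rightarrow> bool" where
  "coarse_map h \<longleftrightarrow> (\<forall>r>0. \<exists>s>0. \<forall>x z. dist x z \<le> r \<longrightarrow> \<bar>h x - h z\<bar> \<le> s)"

definition l2 :: "('a \<Rightarrow> complex) set" where
  "l2 = {\<xi>. (\<lambda>x. (norm (\<xi> x))\<^sup>2) summable_on UNIV}"

definition l2norm :: "('a \<Rightarrow> complex) \<Rightarrow> ennreal" where
  "l2norm \<xi> = (if (\<lambda>x. (norm (\<xi> x))\<^sup>2) summable_on UNIV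
                then ennreal (sqrt (infsum (\<lambda>x. (norm (\<xi> x))\<^sup>2) UNIV)) else \<infinity>)"

definition mult_op :: "('a \<Rightarrow> real) \<Rightarrow> ('a \<Rightarrow> complex) \<Rightarrow> ('a \<Rightarrow> complex)" where
  "mult_op h \<xi> = (\<lambda>x. complex_of_real (h x) * \<xi> x)"

definition mult_dom :: "('a \<Rightarrow> real) \<Rightarrow> ('a \<Rightarrow> complex) set" where
  "mult_dom h = {\<xi> \<in> l2. (\<lambda>x. (norm (complex_of_real (h x) * \<xi> x))\<^sup>2) summable_on UNIV}"

definition partial_translation :: "'a::metric_space set \<Rightarrow> ('a \<Rightarrow> 'a) \<Rightarrow> bool" where
  "partial_translation D f \<longleftrightarrow> inj_on f D \<and> (\<exists>r. \<forall>x\<in>D. dist x (f x) \<le> r)"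

definition partial_r_translation :: "real \<Rightarrow> 'a::metric_space set \<Rightarrow> ('a \<Rightarrow> 'a) \<Rightarrow> bool" where
  "partial_r_translation r D f \<longleftrightarrow> inj_on f D \<and> (\<forall>x\<in>D. dist x (f x) \<le> r)"

text \<open>v_f delta_x = delta_{f x} for x in D, 0 otherwise\<close>
definition vop :: "'a set \<Rightarrow> ('a \<Rightarrow> 'a) \<Rightarrow> ('a \<Rightarrow> complex) \<Rightarrow> ('a \<Rightarrow> complex)" where
  "vop D f \<xi> = (\<lambda>y. if y \<in> f ` D then \<xi> (the_inv_into D f y) else 0)"

definition invariant_under_pt :: "('a::metric_space \<Rightarrow> complex) set \<Rightarrow> bool" where
  "invariant_under_pt E \<longleftrightarrow> (\<forall>D f. partial_translation D f \<longrightarrow> vop D f ` E \<subseteq> E)"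

definition commutator :: "('a \<Rightarrow> real) \<Rightarrow> 'a set \<Rightarrow> ('a \<Rightarrow> 'a) \<Rightarrow> ('a \<Rightarrow> complex) \<Rightarrow> ('a \<Rightarrow> complex)" where
  "commutator h D f \<xi> = (\<lambda>y. mult_op h (vop D f \<xi>) y - vop D f (mult_op h \<xi>) y)"

definition op_norm_on :: "('a \<Rightarrow> complex) set \<Rightarrow> (('a \<Rightarrow> complex) \<Rightarrow> ('a \<Rightarrow> complex)) \<Rightarrow> ennreal" where
  "op_norm_on E T = (SUP \<xi>\<in>{\<xi>\<in>E. l2norm \<xi> \<le> 1}. l2norm (T \<xi>))"

end

theory Submission
  imports Defs
begin

text \<open>For a partial translation \<open>f\<close>, the commutator \<open>[h, v\<^sub>f]\<close> is the weighted shift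
  \<open>\<delta>\<^sub>x \<mapsto> (h (f x) - h x) \<delta>\<^bsub>f x\<^esub>\<close>. Its norm is at most the supremum of the jumps
  \<open>\<bar>h (f x) - h x\<bar>\<close> over \<open>dom f\<close> and at least each single jump (test on \<open>\<delta>\<^sub>x\<close>).
  So coarseness bounds the commutators uniformly over partial \<open>r\<close>-translations, and
  \<open>dom h\<close> is invariant because \<open>h v\<^sub>f = [h, v\<^sub>f] + v\<^sub>f h\<close>. Conversely, if \<open>h\<close> is not
  coarse at scale \<open>r\<close>, local finiteness lets one choose greedily pairs \<open>(x\<^sub>n, z\<^sub>n)\<close> with
  \<open>d(x\<^sub>n, z\<^sub>n) \<le> r\<close>, \<open>\<bar>h x\<^sub>n - h z\<^sub>n\<bar> > n\<close>, pairwise distinct \<open>x\<^sub>n\<close> and pairwise distinct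
  \<open>z\<^sub>n\<close>; then \<open>x\<^sub>n \<mapsto> z\<^sub>n\<close> is a partial translation with unbounded commutator.\<close>

definition weighted_shift ::
    "'a set \<Rightarrow> ('a \<Rightarrow> 'a) \<Rightarrow> ('a \<Rightarrow> complex) \<Rightarrow> ('a \<Rightarrow> complex) \<Rightarrow> ('a \<Rightarrow> complex)" where
  "weighted_shift D f c \<xi> =
     (\<lambda>y. if y \<in> f ` D then c (the_inv_into D f y) * \<xi> (the_inv_into D f y) else 0)"

lemma vop_eq_weighted_shift: "vop D f = weighted_shift D f (\<lambda>_. 1)"
  by (intro ext) (simp add: vop_def weighted_shift_def)

lemma commutator_eq_weighted_shift:
  assumes "inj_on f D"
  shows "commutator h D f = weighted_shift D f (\<lambda>x. complex_of_real (h (f x) - h x))"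
  using assms
  by (intro ext) (auto simp: commutator_def mult_op_def vop_def weighted_shift_def
      f_the_inv_into_f algebra_simps)

lemma weighted_shift_delta:
  assumes "inj_on f D" and "a \<in> D"
  shows "weighted_shift D f c (\<lambda>x. if x = a then 1 else 0) = (\<lambda>y. if y = f a then c a else 0)"
proof
  fix y
  show "weighted_shift D f c (\<lambda>x. if x = a then 1 else 0) y = (if y = f a then c a else 0)"
  proof (cases "y \<in> f ` D")
    case True
    then obtain x where "x \<in> D" "y = f x" by blast
    with assms show ?thesis
      by (auto simp: weighted_shift_def the_inv_into_f_f inj_on_eq_iff)
  next
    case False
    with assms show ?thesis by (auto simp: weighted_shift_def)
  qed
qed

lemma l2norm_l2: "\<xi> \<in> l2 \<Longrightarrow> l2norm \<xi> = ennreal (sqrt (\<Sum>\<^sub>\<infinity>x. (norm (\<xi> x))\<^sup>2))"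
  by (simp add: l2norm_def l2_def)

lemma l2_add:
  assumes "\<xi> \<in> l2" and "\<zeta> \<in> l2"
  shows "(\<lambda>x. \<xi> x + \<zeta> x) \<in> l2"
proof -
  have "(\<lambda>x. 2 * (norm (\<xi> x))\<^sup>2 + 2 * (norm (\<zeta> x))\<^sup>2) summable_on UNIV"
    using assms unfolding l2_def by (intro summable_on_add summable_on_cmult_right) auto
  moreover have "(norm (\<xi> x + \<zeta> x))\<^sup>2 \<le> 2 * (norm (\<xi> x))\<^sup>2 + 2 * (norm (\<zeta> x))\<^sup>2" for x
  proof -
    have "(norm (\<xi> x + \<zeta> x))\<^sup>2 \<le> (norm (\<xi> x) + norm (\<zeta> x))\<^sup>2"
      by (intro power_mono norm_triangle_ineq) auto
    also have "\<dots> \<le> 2 * (norm (\<xi> x))\<^sup>2 + 2 * (norm (\<zeta> x))\<^sup>2"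
      using zero_le_power2[of "norm (\<xi> x) - norm (\<zeta> x)"]
      unfolding power2_diff power2_sum by linarith
    finally show ?thesis .
  qed
  ultimately show ?thesis
    unfolding l2_def using summable_on_comparison_test by fastforce
qed

lemma l2_if_finite_support:
  assumes "finite {x. \<xi> x \<noteq> 0}"
  shows "\<xi> \<in> l2"
  unfolding l2_def mem_Collect_eq
  by (rule finite_nonzero_values_imp_summable_on) (simp add: assms)

lemma l2_delta: "(\<lambda>x. if x = a then c else 0) \<in> l2"
  by (rule l2_if_finite_support, rule finite_subset[of _ "{a}"]) auto

lemma l2norm_delta: "l2norm (\<lambda>x. if x = a then c else 0) = ennreal (norm c)"
proof -
  have "(\<Sum>\<^sub>\<infinity>x. (norm (if x = a then c else 0))\<^sup>2) = (\<Sum>\<^sub>\<infinity>x\<in>{a}. (norm c)\<^sup>2)"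
    by (rule infsum_cong_neutral) auto
  then show ?thesis by (simp add: l2norm_l2 l2_delta)
qed

lemma mult_dom_iff: "\<xi> \<in> mult_dom h \<longleftrightarrow> \<xi> \<in> l2 \<and> mult_op h \<xi> \<in> l2"
  by (simp add: mult_dom_def l2_def mult_op_def)

lemma mult_dom_subset_l2: "mult_dom h \<subseteq> l2"
  by (auto simp: mult_dom_iff)

lemma delta_in_mult_dom: "(\<lambda>x. if x = a then c else 0) \<in> mult_dom h"
proof -
  have "mult_op h (\<lambda>x. if x = a then c else 0) = (\<lambda>x. if x = a then complex_of_real (h a) * c else 0)"
    by (auto simp: mult_op_def)
  then show ?thesis by (simp add: mult_dom_iff l2_delta)
qed

lemma weighted_shift_l2:
  assumes inj: "inj_on f D" and c: "\<And>x. x \<in> D \<Longrightarrow> norm (c x) \<le> K" and \<xi>: "\<xi> \<in> l2"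
  shows "weighted_shift D f c \<xi> \<in> l2"
    and "(\<Sum>\<^sub>\<infinity>y. (norm (weighted_shift D f c \<xi> y))\<^sup>2) \<le> K\<^sup>2 * (\<Sum>\<^sub>\<infinity>x. (norm (\<xi> x))\<^sup>2)"
proof -
  define F where "F = (\<lambda>y. (norm (weighted_shift D f c \<xi> y))\<^sup>2)"
  define G where "G = (\<lambda>x. K\<^sup>2 * (norm (\<xi> x))\<^sup>2)"
  have \<xi>_sum: "(\<lambda>x. (norm (\<xi> x))\<^sup>2) summable_on UNIV"
    using \<xi> by (simp add: l2_def)
  then have \<xi>_sum_D: "(\<lambda>x. (norm (\<xi> x))\<^sup>2) summable_on D"
    using summable_on_subset_banach by blast
  then have G_sum: "G summable_on D"
    unfolding G_def by (rule summable_on_cmult_right)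
  have F_le: "(F \<circ> f) x \<le> G x" if "x \<in> D" for x
  proof -
    have "(F \<circ> f) x = (norm (c x))\<^sup>2 * (norm (\<xi> x))\<^sup>2"
      using that inj by (simp add: F_def weighted_shift_def the_inv_into_f_f norm_mult power_mult_distrib)
    also have "\<dots> \<le> G x"
      unfolding G_def by (intro mult_right_mono power_mono c that) auto
    finally show ?thesis .
  qed
  have Ff_sum: "(F \<circ> f) summable_on D"
    by (rule summable_on_comparison_test[OF G_sum F_le]) (auto simp: F_def)
  have F_outside: "F y = 0" if "y \<notin> f ` D" for y
    using that by (simp add: F_def weighted_shift_def)
  have "F summable_on f ` D"
    using Ff_sum summable_on_reindex[OF inj] by blast
  then have "F summable_on UNIV"
    using summable_on_cong_neutral[of UNIV "f ` D" F F] F_outside by blast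
  then show "weighted_shift D f c \<xi> \<in> l2"
    by (simp add: l2_def F_def)
  have "(\<Sum>\<^sub>\<infinity>y. F y) = (\<Sum>\<^sub>\<infinity>y\<in>f ` D. F y)"
    using infsum_cong_neutral[of UNIV "f ` D" F F] F_outside by auto
  also have "\<dots> = (\<Sum>\<^sub>\<infinity>x\<in>D. (F \<circ> f) x)"
    by (rule infsum_reindex[OF inj])
  also have "\<dots> \<le> (\<Sum>\<^sub>\<infinity>x\<in>D. G x)"
    by (rule infsum_mono[OF Ff_sum G_sum F_le])
  also have "\<dots> = K\<^sup>2 * (\<Sum>\<^sub>\<infinity>x\<in>D. (norm (\<xi> x))\<^sup>2)"
    unfolding G_def by (rule infsum_cmult_right[OF \<xi>_sum_D])
  also have "\<dots> \<le> K\<^sup>2 * (\<Sum>\<^sub>\<infinity>x. (norm (\<xi> x))\<^sup>2)"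
    by (intro mult_left_mono infsum_mono_neutral[OF \<xi>_sum_D \<xi>_sum]) auto
  finally show "(\<Sum>\<^sub>\<infinity>y. (norm (weighted_shift D f c \<xi> y))\<^sup>2) \<le> K\<^sup>2 * (\<Sum>\<^sub>\<infinity>x. (norm (\<xi> x))\<^sup>2)"
    by (simp add: F_def)
qed

lemma l2norm_weighted_shift_le:
  assumes inj: "inj_on f D" and c: "\<And>x. x \<in> D \<Longrightarrow> norm (c x) \<le> K"
    and \<xi>: "\<xi> \<in> l2" and K: "0 \<le> K"
  shows "l2norm (weighted_shift D f c \<xi>) \<le> ennreal K * l2norm \<xi>"
proof -
  let ?I = "\<Sum>\<^sub>\<infinity>x. (norm (\<xi> x))\<^sup>2"
  have "l2norm (weighted_shift D f c \<xi>)
      = ennreal (sqrt (\<Sum>\<^sub>\<infinity>y. (norm (weighted_shift D f c \<xi> y))\<^sup>2))"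
    by (rule l2norm_l2[OF weighted_shift_l2(1)[OF inj c \<xi>]])
  also have "\<dots> \<le> ennreal (sqrt (K\<^sup>2 * ?I))"
    by (intro ennreal_leI real_sqrt_le_mono weighted_shift_l2(2)[OF inj c \<xi>])
  also have "\<dots> = ennreal K * l2norm \<xi>"
    using K \<xi> infsum_nonneg[of UNIV "\<lambda>x. (norm (\<xi> x))\<^sup>2"]
    by (simp add: l2norm_l2 real_sqrt_mult ennreal_mult)
  finally show ?thesis .
qed

lemma op_norm_on_le:
  assumes "\<And>\<xi>. \<xi> \<in> E \<Longrightarrow> l2norm (T \<xi>) \<le> ennreal K * l2norm \<xi>"
  shows "op_norm_on E T \<le> ennreal K"
  unfolding op_norm_on_def
proof (rule SUP_least)
  fix \<xi> assume \<xi>: "\<xi> \<in> {\<xi> \<in> E. l2norm \<xi> \<le> 1}"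
  then have "l2norm (T \<xi>) \<le> ennreal K * l2norm \<xi>"
    using assms by blast
  also have "\<dots> \<le> ennreal K * 1"
    using \<xi> by (intro mult_left_mono) auto
  finally show "l2norm (T \<xi>) \<le> ennreal K" by simp
qed

lemma l2norm_le_op_norm_on:
  assumes "\<xi> \<in> E" and "l2norm \<xi> \<le> 1"
  shows "l2norm (T \<xi>) \<le> op_norm_on E T"
  unfolding op_norm_on_def by (rule SUP_upper) (use assms in auto)

lemma partial_translation_imp_r_translation:
  assumes "partial_translation D f"
  obtains r where "r > 0" and "partial_r_translation r D f"
proof -
  from assms obtain r where "inj_on f D" and "\<forall>x\<in>D. dist x (f x) \<le> r"
    unfolding partial_translation_def by blast
  then have "partial_r_translation (max r 1) D f"
    unfolding partial_r_translation_def by force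
  then show thesis by (rule that[rotated]) simp
qed

lemma commutator_weight_le:
  assumes "partial_r_translation r D f" and "\<And>x z. dist x z \<le> r \<Longrightarrow> \<bar>h x - h z\<bar> \<le> s"
    and "x \<in> D"
  shows "norm (complex_of_real (h (f x) - h x)) \<le> s"
proof -
  have "dist (f x) x \<le> r"
    using assms(1,3) by (simp add: partial_r_translation_def dist_commute)
  then show ?thesis
    unfolding norm_of_real by (rule assms(2))
qed

lemma
  assumes rt: "partial_r_translation r D f" and s: "\<And>x z. dist x z \<le> r \<Longrightarrow> \<bar>h x - h z\<bar> \<le> s"
    and "0 \<le> s" and \<xi>: "\<xi> \<in> l2"
  shows commutator_in_l2: "commutator h D f \<xi> \<in> l2"
    and l2norm_commutator_le: "l2norm (commutator h D f \<xi>) \<le> ennreal s * l2norm \<xi>"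
proof -
  have inj: "inj_on f D"
    using rt by (simp add: partial_r_translation_def)
  note weight = commutator_weight_le[OF rt s]
  show "commutator h D f \<xi> \<in> l2"
    unfolding commutator_eq_weighted_shift[OF inj] by (rule weighted_shift_l2(1)[OF inj weight \<xi>])
  show "l2norm (commutator h D f \<xi>) \<le> ennreal s * l2norm \<xi>"
    unfolding commutator_eq_weighted_shift[OF inj]
    by (rule l2norm_weighted_shift_le[OF inj weight \<xi> \<open>0 \<le> s\<close>])
qed

lemma coarse_map_imp_SUP_commutator_finite:
  fixes h :: "'a::metric_space \<Rightarrow> real"
  assumes "coarse_map h" and "r > 0" and "E \<subseteq> l2"
  shows "(SUP (D, f)\<in>{(D, f). partial_r_translation r D f}. op_norm_on E (commutator h D f)) < \<infinity>"
proof -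
  obtain s where "s > 0" and s: "\<And>x z. dist x z \<le> r \<Longrightarrow> \<bar>h x - h z\<bar> \<le> s"
    using assms(1,2) unfolding coarse_map_def by blast
  have "op_norm_on E (commutator h D f) \<le> ennreal s" if "partial_r_translation r D f" for D f
    using l2norm_commutator_le[OF that s] \<open>s > 0\<close> assms(3) by (intro op_norm_on_le) auto
  then have "(SUP (D, f)\<in>{(D, f). partial_r_translation r D f}. op_norm_on E (commutator h D f))
          \<le> ennreal s"
    by (auto intro!: SUP_least)
  also have "\<dots> < \<infinity>" by simp
  finally show ?thesis .
qed

lemma op_norm_finite_if_SUP_r_translations_finite:
  assumes uniform: "\<forall>r>0. (SUP (D, f)\<in>{(D, f). partial_r_translation r D f}.
                            op_norm_on E (commutator h D f)) < \<infinity>"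
    and "partial_translation D f"
  shows "op_norm_on E (commutator h D f) < \<infinity>"
proof -
  obtain r where "r > 0" and "partial_r_translation r D f"
    using \<open>partial_translation D f\<close> by (rule partial_translation_imp_r_translation)
  then have "op_norm_on E (commutator h D f)
      \<le> (SUP (D, f)\<in>{(D, f). partial_r_translation r D f}. op_norm_on E (commutator h D f))"
    by (intro SUP_upper2[of "(D, f)"]) auto
  also have "\<dots> < \<infinity>"
    using uniform \<open>r > 0\<close> by blast
  finally show ?thesis .
qed

lemma coarse_map_imp_invariant_mult_dom:
  fixes h :: "'a::metric_space \<Rightarrow> real"
  assumes "coarse_map h"
  shows "invariant_under_pt (mult_dom h)"
  unfolding invariant_under_pt_def
proof (intro allI impI image_subsetI)
  fix D :: "'a set" and f \<xi>
  assume "partial_translation D f" and \<xi>: "\<xi> \<in> mult_dom h"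
  then obtain r where "r > 0" and rt: "partial_r_translation r D f"
    by (blast elim: partial_translation_imp_r_translation)
  then obtain s where "s > 0" and s: "\<And>x z. dist x z \<le> r \<Longrightarrow> \<bar>h x - h z\<bar> \<le> s"
    using assms unfolding coarse_map_def by blast
  have inj: "inj_on f D"
    using rt by (simp add: partial_r_translation_def)
  have v_l2: "vop D f \<zeta> \<in> l2" if "\<zeta> \<in> l2" for \<zeta>
    unfolding vop_eq_weighted_shift by (rule weighted_shift_l2(1)[OF inj _ that, of _ 1]) simp
  from \<xi> have "\<xi> \<in> l2" and "mult_op h \<xi> \<in> l2"
    by (simp_all add: mult_dom_iff)
  then have "(\<lambda>y. commutator h D f \<xi> y + vop D f (mult_op h \<xi>) y) \<in> l2"
    using commutator_in_l2[OF rt s] \<open>s > 0\<close> v_l2 by (intro l2_add) auto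
  moreover have "mult_op h (vop D f \<xi>) = (\<lambda>y. commutator h D f \<xi> y + vop D f (mult_op h \<xi>) y)"
    by (simp add: commutator_def)
  ultimately show "vop D f \<xi> \<in> mult_dom h"
    using v_l2[OF \<open>\<xi> \<in> l2\<close>] by (simp add: mult_dom_iff)
qed

lemma commutator_jump_le_op_norm:
  assumes "inj_on f D" and "a \<in> D"
  shows "ennreal \<bar>h (f a) - h a\<bar> \<le> op_norm_on (mult_dom h) (commutator h D f)"
proof -
  let ?\<delta> = "\<lambda>x. if x = a then 1 else 0"
  have "commutator h D f ?\<delta> = (\<lambda>y. if y = f a then complex_of_real (h (f a) - h a) else 0)"
    unfolding commutator_eq_weighted_shift[OF assms(1)] weighted_shift_delta[OF assms] ..
  then have "l2norm (commutator h D f ?\<delta>) = ennreal \<bar>h (f a) - h a\<bar>"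
    by (simp only: l2norm_delta norm_of_real)
  moreover have "l2norm (commutator h D f ?\<delta>) \<le> op_norm_on (mult_dom h) (commutator h D f)"
    by (rule l2norm_le_op_norm_on) (simp_all add: delta_in_mult_dom l2norm_delta)
  ultimately show ?thesis by simp
qed

text \<open>Only finitely many pairs at distance \<open>\<le> r\<close> meet a finite set \<open>F\<close>, so they cannot
  carry arbitrarily large jumps of \<open>h\<close>.\<close>
lemma far_pair_avoiding:
  fixes h :: "'a::metric_space \<Rightarrow> real"
  assumes fin: "\<And>x::'a. finite (cball x r)"
    and unbounded: "\<And>s. \<exists>x z. dist x z \<le> r \<and> s < \<bar>h x - h z\<bar>"
    and "finite F"
  shows "\<exists>x z. dist x z \<le> r \<and> s < \<bar>h x - h z\<bar> \<and> x \<notin> F \<and> z \<notin> F"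
proof -
  let ?V = "(\<lambda>(p, q). \<bar>h p - h q\<bar>) ` (SIGMA p:F. cball p r)"
  have "finite ?V"
    by (intro finite_imageI finite_SigmaI \<open>finite F\<close> fin)
  then obtain M where "\<forall>v\<in>?V. v \<le> M"
    using bdd_above_finite unfolding bdd_above_def by blast
  then have M: "\<bar>h p - h q\<bar> \<le> M" if "p \<in> F" and "dist p q \<le> r" for p q
    using that by (auto intro!: image_eqI[where x = "(p, q)"])
  obtain x z where xz: "dist x z \<le> r" "max s M < \<bar>h x - h z\<bar>"
    using unbounded by blast
  moreover have "x \<notin> F" using M[of x z] xz by auto
  moreover have "z \<notin> F" using M[of z x] xz by (auto simp: dist_commute abs_minus_commute)
  ultimately show ?thesis by auto
qed

lemma inj_sequences_avoiding:
  assumes avoid: "\<And>n F. finite F \<Longrightarrow> \<exists>x z. P n x z \<and> x \<notin> F \<and> z \<notin> F"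
  shows "\<exists>X Z :: nat \<Rightarrow> 'a. inj X \<and> inj Z \<and> (\<forall>n. P n (X n) (Z n))"
proof -
  define good where "good F n p \<longleftrightarrow> P n (fst p) (snd p) \<and> fst p \<notin> F \<and> snd p \<notin> F" for F n p
  define pick where "pick F n = (SOME p. good F n p)" for F n
  have pick: "good F n (pick F n)" if "finite F" for F n
  proof -
    from avoid[of F n, OF that] obtain x z where "good F n (x, z)"
      by (auto simp: good_def)
    then show ?thesis
      unfolding pick_def by (rule someI)
  qed
  define S where "S = rec_nat {} (\<lambda>n F. insert (fst (pick F n)) (insert (snd (pick F n)) F))"
  define X where "X n = fst (pick (S n) n)" for n
  define Z where "Z n = snd (pick (S n) n)" for n
  have S_0: "S 0 = {}" and S_Suc: "S (Suc n) = insert (X n) (insert (Z n) (S n))" for n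
    by (simp_all add: S_def X_def Z_def)
  have S_finite: "finite (S n)" for n
    by (induction n) (simp_all add: S_0 S_Suc)
  have earlier: "X m \<in> S n \<and> Z m \<in> S n" if "m < n" for m n
    using that by (induction n) (auto simp: S_Suc less_Suc_eq)
  have new: "P n (X n) (Z n) \<and> X n \<notin> S n \<and> Z n \<notin> S n" for n
    using pick[OF S_finite, of n n] by (simp add: good_def X_def Z_def)
  have "X m \<noteq> X n \<and> Z m \<noteq> Z n" if "m < n" for m n
    using earlier[OF that] new[of n] by auto
  then have "inj X" and "inj Z"
    unfolding inj_def by (metis linorder_neqE_nat)+
  with new show ?thesis by blast
qed

lemma unbounded_commutator_if_not_coarse:
  fixes h :: "'a::metric_space \<Rightarrow> real"
  assumes fin: "\<And>x::'a. finite (cball x r)"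
    and unbounded: "\<And>s. \<exists>x z. dist x z \<le> r \<and> s < \<bar>h x - h z\<bar>"
  obtains D f where "partial_translation D f"
    and "op_norm_on (mult_dom h) (commutator h D f) = \<infinity>"
proof -
  \<comment> \<open>bracketed to match the premise \<open>P n x z \<and> x \<notin> F \<and> z \<notin> F\<close> of \<open>inj_sequences_avoiding\<close>\<close>
  have avoid: "\<exists>x z. (dist x z \<le> r \<and> real n < \<bar>h x - h z\<bar>) \<and> x \<notin> F \<and> z \<notin> F"
    if "finite F" for n F
    using far_pair_avoiding[OF fin unbounded that] by simp
  obtain X Z :: "nat \<Rightarrow> 'a" where "inj X" and "inj Z"
    and XZ: "\<And>n. dist (X n) (Z n) \<le> r \<and> real n < \<bar>h (X n) - h (Z n)\<bar>"
    using inj_sequences_avoiding[of "\<lambda>n x z. dist x z \<le> r \<and> real n < \<bar>h x - h z\<bar>", OF avoid]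
    by blast
  define f where "f = Z \<circ> inv X"
  have fX: "f (X n) = Z n" for n
    using \<open>inj X\<close> by (simp add: f_def)
  have inj: "inj_on f (range X)"
  proof (rule inj_onI)
    fix a b assume "a \<in> range X" and "b \<in> range X" and "f a = f b"
    then show "a = b" using \<open>inj Z\<close> by (auto simp: fX dest: injD)
  qed
  have "partial_translation (range X) f"
    unfolding partial_translation_def
  proof (intro conjI inj exI ballI)
    fix y assume "y \<in> range X"
    then show "dist y (f y) \<le> r" using XZ by (auto simp: fX)
  qed
  moreover have jump: "of_nat n \<le> op_norm_on (mult_dom h) (commutator h (range X) f)" for n
  proof -
    have "of_nat n \<le> ennreal \<bar>h (f (X n)) - h (X n)\<bar>"
      using XZ[of n] by (simp add: fX abs_minus_commute)
    also have "\<dots> \<le> op_norm_on (mult_dom h) (commutator h (range X) f)"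
      by (rule commutator_jump_le_op_norm[OF inj]) simp
    finally show ?thesis .
  qed
  have "op_norm_on (mult_dom h) (commutator h (range X) f) = \<infinity>"
  proof (rule ccontr)
    assume "op_norm_on (mult_dom h) (commutator h (range X) f) \<noteq> \<infinity>"
    then obtain n where "op_norm_on (mult_dom h) (commutator h (range X) f) < of_nat n"
      using ennreal_Ex_less_of_nat by (auto simp: top.not_eq_extremum)
    with jump[of n] show False by simp
  qed
  ultimately show thesis by (rule that)
qed

lemma coarse_map_if_commutators_bounded:
  fixes h :: "'a::metric_space \<Rightarrow> real"
  assumes "unif_locally_finite TYPE('a)"
    and bounded: "\<And>D f. partial_translation D f \<Longrightarrow> op_norm_on (mult_dom h) (commutator h D f) < \<infinity>"
  shows "coarse_map h"
proof (rule ccontr)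
  assume "\<not> coarse_map h"
  then obtain r where "r > 0"
    and unbounded_pos: "\<forall>s>0. \<exists>x z. dist x z \<le> r \<and> s < \<bar>h x - h z\<bar>"
    unfolding coarse_map_def by (auto simp: not_le)
  have unbounded: "\<exists>x z. dist x z \<le> r \<and> s < \<bar>h x - h z\<bar>" for s
  proof -
    have "max s 1 > 0" by simp
    then obtain x z where "dist x z \<le> r" and "max s 1 < \<bar>h x - h z\<bar>"
      using unbounded_pos by blast
    then show ?thesis by (intro exI[of _ x] exI[of _ z]) simp
  qed
  have fin: "finite (cball x r)" for x :: 'a
    using assms(1) \<open>r > 0\<close> unfolding unif_locally_finite_def by blast
  obtain D f where "partial_translation D f" and "op_norm_on (mult_dom h) (commutator h D f) = \<infinity>"
    by (rule unbounded_commutator_if_not_coarse[OF fin unbounded])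
  with bounded[of D f] show False by simp
qed

theorem proposition3p1p5:
  fixes h :: "'a::metric_space \<Rightarrow> real"
  assumes "unif_locally_finite TYPE('a)"
  shows "(coarse_map h
           \<longleftrightarrow> (invariant_under_pt (mult_dom h) \<and>
                (\<forall>r>0. (SUP (D, f)\<in>{(D, f). partial_r_translation r D f}.
                          op_norm_on (mult_dom h) (commutator h D f)) < \<infinity>)))
       \<and> (coarse_map h
           \<longleftrightarrow> (invariant_under_pt (mult_dom h) \<and>
                (\<forall>D f. partial_translation D f \<longrightarrow>
                          op_norm_on (mult_dom h) (commutator h D f) < \<infinity>)))"
proof -
  have uniform: "\<forall>r>0. (SUP (D, f)\<in>{(D, f). partial_r_translation r D f}.
                          op_norm_on (mult_dom h) (commutator h D f)) < \<infinity>"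
    if "coarse_map h"
    using coarse_map_imp_SUP_commutator_finite[OF that _ mult_dom_subset_l2] by blast
  have each: "\<forall>D f. partial_translation D f \<longrightarrow> op_norm_on (mult_dom h) (commutator h D f) < \<infinity>"
    if "\<forall>r>0. (SUP (D, f)\<in>{(D, f). partial_r_translation r D f}.
                          op_norm_on (mult_dom h) (commutator h D f)) < \<infinity>"
    using op_norm_finite_if_SUP_r_translations_finite[OF that] by blast
  have coarse: "coarse_map h"
    if "\<forall>D f. partial_translation D f \<longrightarrow> op_norm_on (mult_dom h) (commutator h D f) < \<infinity>"
    using that by (intro coarse_map_if_commutators_bounded[OF assms]) blast
  show ?thesis
    using coarse_map_imp_invariant_mult_dom[of h] uniform each coarse by auto
qed

end
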